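(* Let $N_n$ be a noisy discrete memoryless classical channel whose confusability graph $G(N_n)$, with $n$ vertices, is isomorphic to an exclusivity graph $\mathcal{G}$ satisfying $\mathscr{C}_\mathcal{G}=\mathscr{Q}_\mathcal{G}$. Then the vertex-encoding protocol with a perfect $d$-level quantum channel (for any $d$ for which it can be implemented) does not exhibit one-shot zero-error superadditivity; that is, $n\le \alpha(G(N_n))\, d$.
   Context: A discrete memoryless classical channel $N$ has finite input alphabet $\mathcal{X}$, finite output alphabet $\mathcal{Y}$ and conditional probabilities $P(y|x)$. Distinct inputs $x,x'$ are confusable if some output $y$ has $P(y|x)>0$ and $P(y|x')>0$; the confusability graph $G(N)$ has vertex set $\mathcal{X}$ and edges between distinct confusable inputs, and $\alpha(G(N))$ (its independence number) is the one-shot zero-error capacity of $N$. For each output $y$, the hyperedge $h_y=\{x: P(y|x)>0\}$. A perfect $d$-level quantum channel is the identity channel on states of $\mathbb{C}^d$, with one-shot zero-error capacity $d$. The vertex-encoding protocol with a perfect $d$-level quantum channel: one assigns to every input $v\in\mathcal{X}$ a unit vector $\ket{\psi_v}\in\mathbb{C}^d$ such that $\ket{\psi_v}\perp\ket{\psi_w}$ whenever $v,w$ are adjacent in $G(N)$ (an orthogonal representation of $G(N)$ in $\mathbb{C}^d$). Messages are identified with the $n=|\mathcal{X}|$ inputs; to send $v$, the sender inputs $v$ into $N$ and sends $\ket{\psi_v}$ through the perfect quantum channel; upon seeing output $y$, the receiver performs a projective measurement containing the projectors $\ket{\psi_w}\!\bra{\psi_w}$, $w\in h_y$ (completed to the identity),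 which identifies $v$ with certainty. The protocol thus transmits $n$ messages with zero error, and it is said to exhibit one-shot zero-error superadditivity if $n>\alpha(G(N))\cdot d$. Exclusivity graph framework: for a finite graph $\mathcal{G}$ with vertex set $V_\mathcal{G}$ and edge set $E_\mathcal{G}$, a behavior is a map $p:V_\mathcal{G}\to[0,1]$ with $p(v)+p(v')\le 1$ for all edges $\{v,v'\}$. It is classical if there is a probability space $(\Omega,\Sigma,\mu)$ and sets $A_v\in\Sigma$ with $A_v\cap A_{v'}=\varnothing$ for all edges $\{v,v'\}$ and $p(v)=\mu(A_v)$; $\mathscr{C}_\mathcal{G}$ is the set of classical behaviors. It is quantum if there are a Hilbert space $\mathcal{H}$, a density operator $\rho$ and projectors $\Pi_v$ with $\Pi_v\Pi_{v'}=0$ for all edges $\{v,v'\}$ and $p(v)=\mathrm{Tr}(\rho\Pi_v)$; $\mathscr{Q}_\mathcal{G}$ is the set of quantum behaviors. *)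

theory Defs
  imports "HOL-Probability.Probability"
begin

definition dm_channel :: "'x set \<Rightarrow> 'y set \<Rightarrow> ('x \<Rightarrow> 'y \<Rightarrow> real) \<Rightarrow> bool" where
  "dm_channel X Y P \<longleftrightarrow> finite X \<and> finite Y \<and>
     (\<forall>x\<in>X. \<forall>y\<in>Y. 0 \<le> P x y) \<and> (\<forall>x\<in>X. (\<Sum>y\<in>Y. P x y) = 1)"

definition confusable :: "'x set \<Rightarrow> 'y set \<Rightarrow> ('x \<Rightarrow> 'y \<Rightarrow> real) \<Rightarrow> 'x \<Rightarrow> 'x \<Rightarrow> bool" where
  "confusable X Y P x x' \<longleftrightarrow> x \<in> X \<and> x' \<in> X \<and> x \<noteq> x' \<and>
     (\<exists>y\<in>Y. P x y > 0 \<and> P x' y > 0)"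

definition simple_graph :: "'v set \<Rightarrow> ('v \<Rightarrow> 'v \<Rightarrow> bool) \<Rightarrow> bool" where
  "simple_graph V E \<longleftrightarrow> finite V \<and> (\<forall>u w. E u w \<longrightarrow> u \<in> V \<and> w \<in> V) \<and>
     (\<forall>u w. E u w \<longrightarrow> E w u) \<and> (\<forall>u. \<not> E u u)"

definition independent_set :: "'v set \<Rightarrow> ('v \<Rightarrow> 'v \<Rightarrow> bool) \<Rightarrow> 'v set \<Rightarrow> bool" where
  "independent_set V E S \<longleftrightarrow> S \<subseteq> V \<and> (\<forall>u\<in>S. \<forall>w\<in>S. \<not> E u w)"

definition independence_number :: "'v set \<Rightarrow> ('v \<Rightarrow> 'v \<Rightarrow> bool) \<Rightarrow> nat" where
  "independence_number V E = Max (card ` {S. independent_set V E S})"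

definition graph_iso :: "'a set \<Rightarrow> ('a \<Rightarrow> 'a \<Rightarrow> bool) \<Rightarrow> 'b set \<Rightarrow> ('b \<Rightarrow> 'b \<Rightarrow> bool) \<Rightarrow> bool" where
  "graph_iso V E W F \<longleftrightarrow> (\<exists>f. bij_betw f V W \<and>
     (\<forall>u\<in>V. \<forall>w\<in>V. E u w \<longleftrightarrow> F (f u) (f w)))"

text \<open>Vectors of C^d are represented as functions nat => complex, of which only the
  coordinates i < d matter; the inner product is the standard Hermitian one.\<close>
definition cinner :: "nat \<Rightarrow> (nat \<Rightarrow> complex) \<Rightarrow> (nat \<Rightarrow> complex) \<Rightarrow> complex" where
  "cinner d u w = (\<Sum>i<d. cnj (u i) * w i)"

definition orthogonal_representation ::
  "'v set \<Rightarrow> ('v \<Rightarrow> 'v \<Rightarrow> bool) \<Rightarrow> nat \<Rightarrow> ('v \<Rightarrow> nat \<Rightarrow> complex) \<Rightarrow> bool" where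
  "orthogonal_representation V E d \<psi> \<longleftrightarrow>
     (\<forall>v\<in>V. cinner d (\<psi> v) (\<psi> v) = 1) \<and>
     (\<forall>v\<in>V. \<forall>w\<in>V. E v w \<longrightarrow> cinner d (\<psi> v) (\<psi> w) = 0)"

definition behavior :: "'v set \<Rightarrow> ('v \<Rightarrow> 'v \<Rightarrow> bool) \<Rightarrow> ('v \<Rightarrow> real) \<Rightarrow> bool" where
  "behavior V E p \<longleftrightarrow> (\<forall>v\<in>V. 0 \<le> p v \<and> p v \<le> 1) \<and> (\<forall>v. v \<notin> V \<longrightarrow> p v = 0) \<and>
     (\<forall>v\<in>V. \<forall>w\<in>V. E v w \<longrightarrow> p v + p w \<le> 1)"

text \<open>Classical behaviors. The probability space is taken on the sample type nat
  (every classical behavior of a finite graph is realised on a finite probability space).\<close>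
definition classical_behaviors :: "'v set \<Rightarrow> ('v \<Rightarrow> 'v \<Rightarrow> bool) \<Rightarrow> ('v \<Rightarrow> real) set" where
  "classical_behaviors V E = {p. behavior V E p \<and>
     (\<exists>(M :: nat measure) A. prob_space M \<and> (\<forall>v\<in>V. A v \<in> sets M) \<and>
        (\<forall>v\<in>V. \<forall>w\<in>V. E v w \<longrightarrow> A v \<inter> A w = {}) \<and>
        (\<forall>v\<in>V. p v = measure M (A v)))}"

text \<open>Finite-dimensional linear algebra on C^m: matrices as functions nat => nat => complex,
  only entries with indices < m matter.\<close>
definition cmat_mult :: "nat \<Rightarrow> (nat \<Rightarrow> nat \<Rightarrow> complex) \<Rightarrow> (nat \<Rightarrow> nat \<Rightarrow> complex) \<Rightarrow> nat \<Rightarrow> nat \<Rightarrow> complex" where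
  "cmat_mult m A B i j = (\<Sum>k<m. A i k * B k j)"

definition ctrace :: "nat \<Rightarrow> (nat \<Rightarrow> nat \<Rightarrow> complex) \<Rightarrow> complex" where
  "ctrace m A = (\<Sum>i<m. A i i)"

definition hermitian :: "nat \<Rightarrow> (nat \<Rightarrow> nat \<Rightarrow> complex) \<Rightarrow> bool" where
  "hermitian m A \<longleftrightarrow> (\<forall>i<m. \<forall>j<m. A i j = cnj (A j i))"

definition projector :: "nat \<Rightarrow> (nat \<Rightarrow> nat \<Rightarrow> complex) \<Rightarrow> bool" where
  "projector m A \<longleftrightarrow> hermitian m A \<and> (\<forall>i<m. \<forall>j<m. cmat_mult m A A i j = A i j)"

definition density_operator :: "nat \<Rightarrow> (nat \<Rightarrow> nat \<Rightarrow> complex) \<Rightarrow> bool" where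
  "density_operator m \<rho> \<longleftrightarrow> hermitian m \<rho> \<and> ctrace m \<rho> = 1 \<and>
     (\<forall>x :: nat \<Rightarrow> complex. 0 \<le> Re (\<Sum>i<m. \<Sum>j<m. cnj (x i) * \<rho> i j * x j))"

text \<open>Quantum behaviors, realised on the Hilbert spaces C^m, m arbitrary.\<close>
definition quantum_behaviors :: "'v set \<Rightarrow> ('v \<Rightarrow> 'v \<Rightarrow> bool) \<Rightarrow> ('v \<Rightarrow> real) set" where
  "quantum_behaviors V E = {p. behavior V E p \<and>
     (\<exists>(m :: nat) \<rho> Proj. density_operator m \<rho> \<and> (\<forall>v\<in>V. projector m (Proj v)) \<and>
        (\<forall>v\<in>V. \<forall>w\<in>V. E v w \<longrightarrow> (\<forall>i<m. \<forall>j<m. cmat_mult m (Proj v) (Proj w) i j = 0)) \<and>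
        (\<forall>v\<in>V. complex_of_real (p v) = ctrace m (cmat_mult m \<rho> (Proj v))))}"

end

theory Submission
  imports Defs
begin

text \<open>An orthogonal representation of the graph in \<open>\<complex>\<^sup>d\<close> turns the maximally mixed state
  \<open>I/d\<close> and the rank-one projectors onto the representing vectors into a quantum behavior
  that is constant \<open>1/d\<close>. If quantum and classical behaviors coincide, it is realised by events
  \<open>A\<^sub>v\<close> that are disjoint along edges; every sample point then lies in the events of an
  independent set only, so integrating the number of events containing it gives
  \<open>n/d \<le> \<alpha>\<close>.\<close>

lemma finite_independent_sets:
  assumes "finite V"
  shows "finite {S. independent_set V E S}"
proof -
  have "{S. independent_set V E S} \<subseteq> Pow V"
    by (auto simp: independent_set_def)
  then show ?thesis
    using assms by (simp add: finite_subset)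
qed

lemma card_le_independence_number:
  assumes "finite V" and "independent_set V E S"
  shows "card S \<le> independence_number V E"
  unfolding independence_number_def
  using finite_independent_sets[OF assms(1)] assms(2) by (intro Max_ge) auto

lemma independence_number_attained:
  assumes "finite V"
  obtains S where "independent_set V E S" and "card S = independence_number V E"
proof -
  have "finite (card ` {S. independent_set V E S})"
    using finite_independent_sets[OF assms] by (rule finite_imageI)
  moreover have "card ` {S. independent_set V E S} \<noteq> {}"
    by (auto simp: independent_set_def)
  ultimately have "independence_number V E \<in> card ` {S. independent_set V E S}"
    unfolding independence_number_def by (rule Max_in)
  with that show thesis by auto
qed

lemma graph_iso_sym:
  assumes "graph_iso V E W F"
  shows "graph_iso W F V E"
proof -
  obtain f where f: "bij_betw f V W" and edges: "\<forall>u\<in>V. \<forall>w\<in>V. E u w \<longleftrightarrow> F (f u) (f w)"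
    using assms by (auto simp: graph_iso_def)
  have "\<forall>u\<in>W. \<forall>w\<in>W. F u w \<longleftrightarrow> E (inv_into V f u) (inv_into V f w)"
    using edges f by (auto simp: bij_betw_def bij_betw_inv_into_right inv_into_into)
  with bij_betw_inv_into[OF f] show ?thesis by (auto simp: graph_iso_def)
qed

lemma independence_number_le_graph_iso:
  assumes "graph_iso V E W F" and "finite V"
  shows "independence_number V E \<le> independence_number W F"
proof -
  obtain f where f: "bij_betw f V W" and edges: "\<forall>u\<in>V. \<forall>w\<in>V. E u w \<longleftrightarrow> F (f u) (f w)"
    using assms(1) by (auto simp: graph_iso_def)
  obtain S where S: "independent_set V E S" and card_S: "card S = independence_number V E"
    using independence_number_attained[OF assms(2)] .
  have "finite W"
    using bij_betw_finite[OF f] assms(2) by simp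
  have image_independent: "independent_set W F (f ` S)"
    unfolding independent_set_def
  proof (intro conjI ballI)
    show "f ` S \<subseteq> W"
      using S f by (auto simp: independent_set_def bij_betw_def)
    fix a b assume "a \<in> f ` S" and "b \<in> f ` S"
    then obtain u w where "u \<in> S" "w \<in> S" and ab: "a = f u" "b = f w" by blast
    with S have "u \<in> V" "w \<in> V" "\<not> E u w" by (auto simp: independent_set_def)
    with edges ab show "\<not> F a b" by simp
  qed
  have "inj_on f S"
    using inj_on_subset[of f V S] f S by (simp add: bij_betw_def independent_set_def)
  then have "card (f ` S) = card S"
    by (rule card_image)
  with card_S card_le_independence_number[OF \<open>finite W\<close> image_independent] show ?thesis
    by simp
qed

lemma independence_number_graph_iso:
  assumes "graph_iso V E W F" and "finite V"
  shows "independence_number V E = independence_number W F"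
proof -
  obtain f where "bij_betw f V W"
    using assms(1) by (auto simp: graph_iso_def)
  with assms(2) have "finite W"
    by (simp add: bij_betw_finite)
  show ?thesis
  proof (rule order_antisym)
    show "independence_number V E \<le> independence_number W F"
      using assms by (rule independence_number_le_graph_iso)
    show "independence_number W F \<le> independence_number V E"
      using graph_iso_sym[OF assms(1)] \<open>finite W\<close> by (rule independence_number_le_graph_iso)
  qed
qed

lemma classical_behavior_sum_le_independence_number:
  assumes "finite V" and "p \<in> classical_behaviors V E"
  shows "(\<Sum>v\<in>V. p v) \<le> independence_number V E"
proof -
  obtain M :: "nat measure" and A where "prob_space M" and A_sets: "\<forall>v\<in>V. A v \<in> sets M"
    and A_disj: "\<forall>v\<in>V. \<forall>w\<in>V. E v w \<longrightarrow> A v \<inter> A w = {}"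
    and p_A: "\<forall>v\<in>V. p v = measure M (A v)"
    using assms(2) unfolding classical_behaviors_def by blast
  interpret prob_space M by fact
  let ?\<alpha> = "independence_number V E"
  let ?count = "\<lambda>\<omega>. \<Sum>v\<in>V. indicator (A v) \<omega> :: real"
  have count_le: "?count \<omega> \<le> ?\<alpha>" for \<omega>
  proof -
    have "?count \<omega> = card {v\<in>V. \<omega> \<in> A v}"
      using assms(1) by (simp add: indicator_def sum.If_cases Int_def)
    moreover have "independent_set V E {v\<in>V. \<omega> \<in> A v}"
      using A_disj by (auto simp: independent_set_def)
    ultimately show ?thesis
      using card_le_independence_number[OF assms(1)] by simp
  qed
  have integrable: "integrable M (indicator (A v) :: _ \<Rightarrow> real)" if "v \<in> V" for v
    using A_sets that by (auto simp: less_top[symmetric])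
  have "(\<Sum>v\<in>V. p v) = (\<Sum>v\<in>V. integral\<^sup>L M (indicator (A v)))"
    using p_A A_sets by (intro sum.cong) auto
  also have "\<dots> = integral\<^sup>L M ?count"
    using integrable by (simp add: Bochner_Integration.integral_sum)
  also have "\<dots> \<le> integral\<^sup>L M (\<lambda>_. real ?\<alpha>)"
    using integrable count_le by (intro integral_mono) auto
  also have "\<dots> = ?\<alpha>"
    by (simp add: prob_space)
  finally show ?thesis .
qed

definition outer :: "(nat \<Rightarrow> complex) \<Rightarrow> nat \<Rightarrow> nat \<Rightarrow> complex" where
  "outer u i j = u i * cnj (u j)"

definition maximally_mixed :: "nat \<Rightarrow> nat \<Rightarrow> nat \<Rightarrow> complex" where
  "maximally_mixed d i j = (if i = j then 1 / of_nat d else 0)"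

lemma cmat_mult_outer:
  "cmat_mult d (outer u) (outer w) i j = u i * cnj (w j) * cinner d u w"
  by (simp add: cmat_mult_def outer_def cinner_def sum_distrib_left mult_ac)

lemma projector_outer:
  assumes "cinner d u u = 1"
  shows "projector d (outer u)"
  using assms by (simp add: projector_def hermitian_def cmat_mult_outer outer_def)

lemma sum_maximally_mixed_left:
  assumes "i < d"
  shows "(\<Sum>j<d. maximally_mixed d i j * f j) = f i / of_nat d"
proof -
  have "(\<Sum>j<d. maximally_mixed d i j * f j) = (\<Sum>j<d. if i = j then f j / of_nat d else 0)"
    by (intro sum.cong) (auto simp: maximally_mixed_def)
  then show ?thesis using assms by simp
qed

lemma ctrace_maximally_mixed_outer:
  "ctrace d (cmat_mult d (maximally_mixed d) (outer u)) = cnj (cinner d u u) / of_nat d"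
  by (simp add: ctrace_def cmat_mult_def sum_maximally_mixed_left outer_def cinner_def
      sum_divide_distrib mult.commute)

lemma density_operator_maximally_mixed:
  assumes "0 < d"
  shows "density_operator d (maximally_mixed d)"
  unfolding density_operator_def hermitian_def ctrace_def
proof (intro conjI allI impI)
  show "maximally_mixed d i j = cnj (maximally_mixed d j i)" for i j
    by (simp add: maximally_mixed_def)
  show "(\<Sum>i<d. maximally_mixed d i i) = 1"
    using assms by (simp add: maximally_mixed_def)
  fix x :: "nat \<Rightarrow> complex"
  have "(\<Sum>i<d. \<Sum>j<d. cnj (x i) * maximally_mixed d i j * x j) = (\<Sum>i<d. cnj (x i) * x i / of_nat d)"
    by (intro sum.cong refl) (simp add: mult.assoc sum_maximally_mixed_left flip: sum_distrib_left)
  also have "0 \<le> Re \<dots>"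
    unfolding Re_sum by (intro sum_nonneg) (simp add: Re_divide)
  finally show "0 \<le> Re (\<Sum>i<d. \<Sum>j<d. cnj (x i) * maximally_mixed d i j * x j)" .
qed

lemma orthogonal_representation_dim_pos:
  assumes "orthogonal_representation V E d \<phi>" and "v \<in> V"
  shows "0 < d"
proof -
  have "cinner d (\<phi> v) (\<phi> v) = 1"
    using assms by (simp add: orthogonal_representation_def)
  then show ?thesis by (cases d) (auto simp: cinner_def)
qed

lemma orthogonal_representation_dim_ge_2:
  assumes "orthogonal_representation V E d \<phi>" and "v \<in> V" and "w \<in> V" and "E v w"
  shows "2 \<le> d"
proof (rule ccontr)
  assume "\<not> 2 \<le> d"
  with orthogonal_representation_dim_pos[OF assms(1,2)] have "d = 1" by simp
  with assms have "cnj (\<phi> v 0) * \<phi> v 0 = 1" and "cnj (\<phi> w 0) * \<phi> w 0 = 1"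
    and "cnj (\<phi> v 0) * \<phi> w 0 = 0"
    by (auto simp: orthogonal_representation_def cinner_def)
  then show False by auto
qed

lemma orthogonal_representation_quantum_behavior:
  assumes rep: "orthogonal_representation V E d \<phi>" and "0 < d"
  shows "(\<lambda>v. if v \<in> V then 1 / real d else 0) \<in> quantum_behaviors V E"
  unfolding quantum_behaviors_def
proof (intro CollectI conjI exI ballI allI impI)
  show "behavior V E (\<lambda>v. if v \<in> V then 1 / real d else 0)"
    using \<open>0 < d\<close> orthogonal_representation_dim_ge_2[OF rep]
    by (auto simp: behavior_def field_simps)
  show "density_operator d (maximally_mixed d)"
    using \<open>0 < d\<close> by (rule density_operator_maximally_mixed)
  show "projector d (outer (\<phi> v))" if "v \<in> V" for v
    using rep that by (intro projector_outer) (simp add: orthogonal_representation_def)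
  show "cmat_mult d (outer (\<phi> v)) (outer (\<phi> w)) i j = 0" if "v \<in> V" "w \<in> V" "E v w" for v w i j
    using rep that by (simp add: cmat_mult_outer orthogonal_representation_def)
  show "complex_of_real (if v \<in> V then 1 / real d else 0)
      = ctrace d (cmat_mult d (maximally_mixed d) (outer (\<phi> v)))" if "v \<in> V" for v
    using rep that by (simp add: ctrace_maximally_mixed_outer orthogonal_representation_def)
qed

lemma orthogonal_representation_graph_iso:
  assumes "graph_iso V E W F" and "orthogonal_representation V E d \<psi>"
  obtains \<phi> where "orthogonal_representation W F d \<phi>"
proof -
  obtain g where g: "bij_betw g W V" and edges: "\<forall>u\<in>W. \<forall>w\<in>W. F u w \<longleftrightarrow> E (g u) (g w)"
    using graph_iso_sym[OF assms(1)] by (auto simp: graph_iso_def)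
  have "orthogonal_representation W F d (\<psi> \<circ> g)"
    using assms(2) g edges by (auto simp: orthogonal_representation_def bij_betw_def)
  then show thesis by (rule that)
qed

theorem theorem2:
  fixes X :: "'x set" and Y :: "'y set" and P :: "'x \<Rightarrow> 'y \<Rightarrow> real"
    and V :: "'v set" and E :: "'v \<Rightarrow> 'v \<Rightarrow> bool"
    and d :: nat and \<psi> :: "'x \<Rightarrow> nat \<Rightarrow> complex"
  assumes "dm_channel X Y P"
    and "simple_graph V E"
    and "graph_iso X (confusable X Y P) V E"
    and "classical_behaviors V E = quantum_behaviors V E"
    and "orthogonal_representation X (confusable X Y P) d \<psi>"
  shows "card X \<le> independence_number X (confusable X Y P) * d"
proof (cases "X = {}")
  case False
  have "finite X" "finite V"
    using assms(1,2) by (auto simp: dm_channel_def simple_graph_def)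
  from False obtain x where "x \<in> X" by blast
  with assms(5) have "0 < d"
    by (rule orthogonal_representation_dim_pos)
  have card_V: "card V = card X"
    using assms(3) bij_betw_same_card by (force simp: graph_iso_def)
  obtain \<phi> where "orthogonal_representation V E d \<phi>"
    using orthogonal_representation_graph_iso[OF assms(3,5)] .
  then have "(\<lambda>v. if v \<in> V then 1 / real d else 0) \<in> classical_behaviors V E"
    using \<open>0 < d\<close> assms(4) orthogonal_representation_quantum_behavior by blast
  then have "real (card V) / real d \<le> independence_number V E"
    using classical_behavior_sum_le_independence_number[OF \<open>finite V\<close>] by fastforce
  also have "independence_number V E = independence_number X (confusable X Y P)"
    using independence_number_graph_iso[OF assms(3) \<open>finite X\<close>] by simp
  finally show ?thesis
    using \<open>0 < d\<close> card_V by (simp add: field_simps flip: of_nat_mult)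
qed simp

end
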